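(* Let $H$ be a complex infinite-dimensional separable Hilbert space. A Bessel sequence $(f_n)_{n=1}^\infty$ in $H$ admits a finite extension to a frame (i.e. there is a finite sequence $(x_n)_{n=1}^k$ in $H$ such that $x_1,\dots,x_k,f_1,f_2,\dots$ is a frame for $H$) if and only if there exists a Bessel sequence in $H$ that is essentially dual to $(f_n)_{n=1}^\infty$.
   Context: Bessel sequences $(f_n)$ and $(g_n)$ in $H$ with analysis operators $U$ and $V$ (where $Ux=(\langle x,f_n\rangle)_n\in\ell^2$, $Vx=(\langle x,g_n\rangle)_n\in\ell^2$) are called essentially dual to each other if $I-V^*U$ is a compact operator on $H$. *)

theory Defs
  imports "HOL-Analysis.Analysis"
begin

text \<open>HOL-Analysis has no complex inner product spaces, so we introduce the standard
axioms of a complex inner product space (inner product linear in the first argument,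
conjugate linear in the second), whose norm is the induced one.\<close>

class complex_inner = real_normed_vector +
  fixes scaleC :: "complex \<Rightarrow> 'a \<Rightarrow> 'a" (infixr \<open>*\<^sub>C\<close> 75)
    and cinner :: "'a \<Rightarrow> 'a \<Rightarrow> complex"
  assumes scaleC_add_right: "a *\<^sub>C (x + y) = a *\<^sub>C x + a *\<^sub>C y"
    and scaleC_add_left: "(a + b) *\<^sub>C x = a *\<^sub>C x + b *\<^sub>C x"
    and scaleC_scaleC: "a *\<^sub>C (b *\<^sub>C x) = (a * b) *\<^sub>C x"
    and scaleC_one: "1 *\<^sub>C x = x"
    and scaleC_of_real: "complex_of_real r *\<^sub>C x = r *\<^sub>R x"
    and cinner_commute: "cinner x y = cnj (cinner y x)"
    and cinner_add_left: "cinner (x + y) z = cinner x z + cinner y z"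
    and cinner_scaleC_left: "cinner (a *\<^sub>C x) y = a * cinner x y"
    and cinner_ge_zero: "Im (cinner x x) = 0 \<and> Re (cinner x x) \<ge> 0"
    and cinner_eq_zero_iff: "cinner x x = 0 \<longleftrightarrow> x = 0"
    and norm_eq_sqrt_cinner: "norm x = sqrt (Re (cinner x x))"

class complex_hilbert = complex_inner + complete_space

definition separable_type :: "'a::metric_space itself \<Rightarrow> bool" where
  "separable_type _ \<longleftrightarrow> (\<exists>D::'a set. countable D \<and> closure D = UNIV)"

definition finite_dim_complex :: "'a::complex_inner itself \<Rightarrow> bool" where
  "finite_dim_complex _ \<longleftrightarrow>
     (\<exists>F::'a set. finite F \<and> (\<forall>x. \<exists>c. x = (\<Sum>v\<in>F. c v *\<^sub>C v)))"

definition bessel_seq :: "(nat \<Rightarrow> 'a::complex_inner) \<Rightarrow> bool" where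
  "bessel_seq f \<longleftrightarrow> (\<exists>B>0. \<forall>x. summable (\<lambda>n. (cmod (cinner x (f n)))\<^sup>2) \<and>
       (\<Sum>n. (cmod (cinner x (f n)))\<^sup>2) \<le> B * (norm x)\<^sup>2)"

definition frame_seq :: "(nat \<Rightarrow> 'a::complex_inner) \<Rightarrow> bool" where
  "frame_seq f \<longleftrightarrow> (\<exists>A B. 0 < A \<and> (\<forall>x. summable (\<lambda>n. (cmod (cinner x (f n)))\<^sup>2) \<and>
       A * (norm x)\<^sup>2 \<le> (\<Sum>n. (cmod (cinner x (f n)))\<^sup>2) \<and>
       (\<Sum>n. (cmod (cinner x (f n)))\<^sup>2) \<le> B * (norm x)\<^sup>2))"

text \<open>V^* U x = sum_n <x,f_n> g_n, where U, V are the analysis operators of f, g.\<close>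
definition cross_frame_op :: "(nat \<Rightarrow> 'a::complex_inner) \<Rightarrow> (nat \<Rightarrow> 'a) \<Rightarrow> 'a \<Rightarrow> 'a" where
  "cross_frame_op f g x = (\<Sum>n. cinner x (f n) *\<^sub>C g n)"

definition compact_operator :: "('a::real_normed_vector \<Rightarrow> 'a) \<Rightarrow> bool" where
  "compact_operator T \<longleftrightarrow> compact (closure (T ` cball 0 1))"

definition essentially_dual :: "(nat \<Rightarrow> 'a::complex_inner) \<Rightarrow> (nat \<Rightarrow> 'a) \<Rightarrow> bool" where
  "essentially_dual f g \<longleftrightarrow> bessel_seq f \<and> bessel_seq g \<and>
     compact_operator (\<lambda>x. x - cross_frame_op f g x)"

end

theory Submission
  imports Defs
begin

text \<open>
  Let \<open>U\<close>, \<open>V\<close> be the analysis operators of \<open>f\<close>, \<open>g\<close>. If \<open>K = I - V\<^sup>*U\<close> is compact, the image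
  of the unit ball under \<open>K\<close> is covered by finitely many balls of radius \<open>1/4\<close> with centres
  \<open>y\<^sub>1, \<dots>, y\<^sub>k\<close>. A unit vector \<open>u\<close> then either has \<open>\<parallel>V\<^sup>*U u\<parallel> \<ge> 1/4\<close>, or lies within \<open>1/2\<close> of
  some \<open>y\<^sub>i\<close> and so has \<open>|\<langle>u, y\<^sub>i\<rangle>| > 3/8\<close>. As \<open>\<parallel>V\<^sup>*U u\<parallel>\<^sup>2 \<le> B\<^sub>g \<Sum>\<^sub>n |\<langle>u, f\<^sub>n\<rangle>|\<^sup>2\<close>, this is a
  lower frame bound for \<open>y\<^sub>1, \<dots>, y\<^sub>k, f\<^sub>1, f\<^sub>2, \<dots>\<close>.

  Conversely, let \<open>x\<^sub>1, \<dots>, x\<^sub>k, f\<^sub>1, f\<^sub>2, \<dots>\<close> be a frame with bounds \<open>A \<le> B\<close>. Its frame operator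
  \<open>S = S\<^sub>f + \<Sum>\<^sub>i \<langle>-, x\<^sub>i\<rangle> x\<^sub>i\<close>, with \<open>S\<^sub>f\<close> the frame operator of \<open>f\<close>, satisfies
  \<open>\<parallel>I - S/B\<parallel> \<le> 1 - A/B\<close>, so it is inverted by a Neumann series. Then \<open>g\<^sub>n = S\<^sup>-\<^sup>1 f\<^sub>n\<close> is a
  Bessel sequence with \<open>V\<^sup>*U = S\<^sup>-\<^sup>1 S\<^sub>f\<close>, and \<open>I - V\<^sup>*U = S\<^sup>-\<^sup>1 \<Sum>\<^sub>i \<langle>-, x\<^sub>i\<rangle> x\<^sub>i\<close> has finite rank.
\<close>

section \<open>Complex inner product spaces\<close>

lemma scaleC_zero_left [simp]: "(0::complex) *\<^sub>C (x::'a::complex_inner) = 0"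
  using scaleC_of_real[of 0 x] by simp

lemma scaleC_zero_right [simp]: "a *\<^sub>C (0::'a::complex_inner) = 0"
  using scaleC_add_right[of a 0 0] by simp

lemma scaleC_minus_right: "a *\<^sub>C (- x::'a::complex_inner) = - (a *\<^sub>C x)"
  using scaleC_add_right[of a x "-x"] by (simp add: eq_neg_iff_add_eq_0 add.commute)

lemma scaleC_diff_right: "a *\<^sub>C (x - y::'a::complex_inner) = a *\<^sub>C x - a *\<^sub>C y"
  using scaleC_add_right[of a x "-y"] by (simp add: scaleC_minus_right)

lemma scaleC_scaleR: "a *\<^sub>C (r *\<^sub>R (x::'a::complex_inner)) = r *\<^sub>R (a *\<^sub>C x)"
  by (metis scaleC_of_real scaleC_scaleC mult.commute)

lemma scaleR_scaleC: "(r *\<^sub>R a) *\<^sub>C (x::'a::complex_inner) = r *\<^sub>R (a *\<^sub>C x)"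
  by (metis scaleC_of_real scaleC_scaleC scaleR_conv_of_real)

lemma cinner_zero_left [simp]: "cinner (0::'a::complex_inner) y = 0"
  using cinner_add_left[of 0 0 y] by simp

lemma cinner_zero_right [simp]: "cinner (x::'a::complex_inner) 0 = 0"
  using cinner_commute[of x 0] by simp

lemma cinner_add_right: "cinner (x::'a::complex_inner) (y + z) = cinner x y + cinner x z"
  by (metis cinner_add_left cinner_commute complex_cnj_add)

lemma cinner_scaleC_right: "cinner (x::'a::complex_inner) (a *\<^sub>C y) = cnj a * cinner x y"
  by (metis cinner_commute cinner_scaleC_left complex_cnj_mult)

lemma cinner_minus_left: "cinner (- x::'a::complex_inner) y = - cinner x y"
  using cinner_add_left[of x "-x" y] by (simp add: eq_neg_iff_add_eq_0 add.commute)

lemma cinner_minus_right: "cinner (x::'a::complex_inner) (- y) = - cinner x y"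
  using cinner_add_right[of x y "-y"] by (simp add: eq_neg_iff_add_eq_0 add.commute)

lemma cinner_diff_left: "cinner (x - y::'a::complex_inner) z = cinner x z - cinner y z"
  using cinner_add_left[of x "-y" z] by (simp add: cinner_minus_left)

lemma cinner_diff_right: "cinner (x::'a::complex_inner) (y - z) = cinner x y - cinner x z"
  using cinner_add_right[of x y "-z"] by (simp add: cinner_minus_right)

lemma cinner_scaleR_left: "cinner (r *\<^sub>R x::'a::complex_inner) y = of_real r * cinner x y"
  by (metis cinner_scaleC_left scaleC_of_real)

lemma cinner_scaleR_right: "cinner (x::'a::complex_inner) (r *\<^sub>R y) = of_real r * cinner x y"
  by (metis cinner_scaleC_right scaleC_of_real complex_cnj_complex_of_real)

lemma cinner_sum_right: "cinner (y::'a::complex_inner) (\<Sum>i\<in>I. f i) = (\<Sum>i\<in>I. cinner y (f i))"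
  by (induction I rule: infinite_finite_induct) (auto simp: cinner_add_right)

lemma cinner_self: "cinner (x::'a::complex_inner) x = complex_of_real ((norm x)\<^sup>2)"
proof -
  have "Im (cinner x x) = 0" "Re (cinner x x) \<ge> 0" using cinner_ge_zero by auto
  moreover have "(norm x)\<^sup>2 = Re (cinner x x)" using norm_eq_sqrt_cinner[of x] calculation by simp
  ultimately show ?thesis by (simp add: complex_eq_iff)
qed

lemma power2_norm_diff:
  "(norm (x - y::'a::complex_inner))\<^sup>2 = (norm x)\<^sup>2 + (norm y)\<^sup>2 - 2 * Re (cinner x y)"
proof -
  have "complex_of_real ((norm (x - y))\<^sup>2) = cinner (x - y) (x - y)" by (simp add: cinner_self)
  also have "\<dots> = cinner x x - cinner x y - cinner y x + cinner y y"
    by (simp add: cinner_diff_left cinner_diff_right)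
  also have "\<dots> = of_real ((norm x)\<^sup>2) + of_real ((norm y)\<^sup>2) - (cinner x y + cnj (cinner x y))"
    by (simp add: cinner_self cinner_commute[of y x])
  also have "cinner x y + cnj (cinner x y) = of_real (2 * Re (cinner x y))"
    by (simp add: complex_add_cnj)
  finally show ?thesis by (metis of_real_add of_real_diff of_real_eq_iff)
qed

lemma le_mult_if_quadratic_nonneg:
  fixes P Q c :: real
  assumes "c \<ge> 0" "Q \<ge> 0" and nonneg: "\<And>t. P - 2 * t * c + t\<^sup>2 * c * Q \<ge> 0"
  shows "c \<le> P * Q"
proof (cases "Q = 0")
  case True
  show ?thesis
  proof (rule ccontr)
    assume "\<not> ?thesis"
    then have "c > 0" using True by simp
    have "P - 2 * ((P + 1) / (2 * c)) * c + ((P + 1) / (2 * c))\<^sup>2 * c * Q \<ge> 0" by (rule nonneg)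
    then show False using True \<open>c > 0\<close> by (simp add: field_simps)
  qed
next
  case False
  have "P - 2 * (1 / Q) * c + (1 / Q)\<^sup>2 * c * Q \<ge> 0" by (rule nonneg)
  then have "P - c / Q \<ge> 0" using False by (simp add: power2_eq_square field_simps)
  then show ?thesis using False \<open>Q \<ge> 0\<close> by (simp add: field_simps)
qed

text \<open>Only semidefiniteness is assumed, so that this also applies to the forms \<open>\<langle>R x, y\<rangle>\<close> of
  positive operators \<open>R\<close>.\<close>

lemma hermitian_form_Cauchy_Schwarz:
  fixes p :: "'a::complex_inner \<Rightarrow> 'a \<Rightarrow> complex"
  assumes add: "\<And>x y z. p (x + y) z = p x z + p y z"
    and scale: "\<And>a x y. p (a *\<^sub>C x) y = a * p x y"
    and herm: "\<And>x y. p x y = cnj (p y x)"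
    and pos: "\<And>x. 0 \<le> Re (p x x)"
  shows "(cmod (p x y))\<^sup>2 \<le> Re (p x x) * Re (p y y)"
proof -
  have diff: "p (x - y) z = p x z - p y z" for x y z
    using add[of "x - y" y z] by simp
  have diff_right: "p z (x - y) = p z x - p z y" for x y z
    by (metis herm diff complex_cnj_diff)
  have scale_right: "p x (b *\<^sub>C y) = cnj b * p x y" for x y b
    by (metis herm scale complex_cnj_mult complex_cnj_cnj)
  define a where "a = p x y"
  have "Re (p x x) - 2 * t * (cmod a)\<^sup>2 + t\<^sup>2 * (cmod a)\<^sup>2 * Re (p y y) \<ge> 0" for t :: real
  proof -
    define s where "s = complex_of_real t * a"
    have "p (x - s *\<^sub>C y) (x - s *\<^sub>C y) = p x x - cnj s * a - s * cnj a + s * cnj s * p y y"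
      by (simp add: diff diff_right scale scale_right a_def herm[of y x] algebra_simps)
    also have "\<dots> = p x x - 2 * of_real t * (a * cnj a) + (of_real t)\<^sup>2 * (a * cnj a) * p y y"
      by (simp add: s_def algebra_simps power2_eq_square)
    also have "a * cnj a = of_real ((cmod a)\<^sup>2)" by (rule complex_norm_square[symmetric])
    finally show ?thesis using pos[of "x - s *\<^sub>C y"] by (simp add: power2_eq_square)
  qed
  then show ?thesis unfolding a_def by (intro le_mult_if_quadratic_nonneg pos) simp_all
qed

lemma norm_cinner_le: "cmod (cinner x y) \<le> norm (x::'a::complex_inner) * norm y"
proof -
  have "(cmod (cinner x y))\<^sup>2 \<le> Re (cinner x x) * Re (cinner y y)"
    by (rule hermitian_form_Cauchy_Schwarz)
       (auto simp: cinner_add_left cinner_scaleC_left cinner_ge_zero intro: cinner_commute)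
  also have "\<dots> = (norm x * norm y)\<^sup>2" by (simp add: cinner_self power_mult_distrib)
  finally show ?thesis by (meson norm_ge_zero power2_le_imp_le zero_le_mult_iff)
qed

lemma norm_scaleC: "norm (a *\<^sub>C (x::'a::complex_inner)) = cmod a * norm x"
proof -
  have "complex_of_real ((norm (a *\<^sub>C x))\<^sup>2) = cinner (a *\<^sub>C x) (a *\<^sub>C x)"
    by (rule cinner_self[symmetric])
  also have "\<dots> = (a * cnj a) * cinner x x"
    by (simp add: cinner_scaleC_left cinner_scaleC_right mult.assoc)
  also have "\<dots> = of_real ((cmod a * norm x)\<^sup>2)"
    by (simp only: complex_norm_square cinner_self of_real_mult power_mult_distrib)
  finally have "(norm (a *\<^sub>C x))\<^sup>2 = (cmod a * norm x)\<^sup>2" using of_real_eq_iff by blast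
  then show ?thesis by (simp add: power2_eq_iff_nonneg)
qed

lemma bounded_linear_scaleC_right: "bounded_linear (\<lambda>x::'a::complex_inner. a *\<^sub>C x)"
  by (rule bounded_linear_intro[where K="cmod a"])
     (auto simp: scaleC_add_right scaleC_scaleR norm_scaleC)

lemma bounded_linear_scaleC_left: "bounded_linear (\<lambda>a. a *\<^sub>C (x::'a::complex_inner))"
  by (rule bounded_linear_intro[where K="norm x"])
     (auto simp: scaleC_add_left scaleR_scaleC norm_scaleC)

lemma bounded_linear_cinner_left: "bounded_linear (\<lambda>x::'a::complex_inner. cinner x y)"
  by (rule bounded_linear_intro[where K="norm y"])
     (auto simp: cinner_add_left cinner_scaleR_left scaleR_conv_of_real norm_cinner_le)

lemma bounded_linear_cinner_right: "bounded_linear (\<lambda>x::'a::complex_inner. cinner y x)"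
proof -
  have "bounded_linear (\<lambda>x. cnj (cinner x y))"
    by (rule bounded_linear_compose[OF bounded_linear_cnj bounded_linear_cinner_left])
  then show ?thesis by (subst (asm) cinner_commute[symmetric])
qed

lemma cinner_suminf_left:
  "summable X \<Longrightarrow> cinner (suminf X) (y::'a::complex_inner) = (\<Sum>n. cinner (X n) y)"
  by (rule bounded_linear.suminf[OF bounded_linear_cinner_left])

lemma cinner_suminf_right:
  "summable X \<Longrightarrow> cinner (y::'a::complex_inner) (suminf X) = (\<Sum>n. cinner y (X n))"
  by (rule bounded_linear.suminf[OF bounded_linear_cinner_right])

definition clinear :: "('a::complex_inner \<Rightarrow> 'b::complex_inner) \<Rightarrow> bool" where
  "clinear T \<longleftrightarrow> (\<forall>x y. T (x + y) = T x + T y) \<and> (\<forall>a x. T (a *\<^sub>C x) = a *\<^sub>C T x)"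

lemma clinearI:
  "(\<And>x y. T (x + y) = T x + T y) \<Longrightarrow> (\<And>a x. T (a *\<^sub>C x) = a *\<^sub>C T x) \<Longrightarrow> clinear T"
  unfolding clinear_def by blast

lemma clinear_add: "clinear T \<Longrightarrow> T (x + y) = T x + T y"
  and clinear_scaleC: "clinear T \<Longrightarrow> T (a *\<^sub>C x) = a *\<^sub>C T x"
  unfolding clinear_def by blast+

lemma clinear_imp_linear: "clinear T \<Longrightarrow> linear T"
  by (rule linearI)
     (auto simp: clinear_add clinear_scaleC[of T "of_real _", unfolded scaleC_of_real])

text \<open>Cauchy--Schwarz for the form \<open>\<langle>R x, y\<rangle>\<close> gives
  \<open>\<parallel>R x\<parallel>\<^sup>4 \<le> \<langle>R x, x\<rangle> \<langle>R (R x), R x\<rangle> \<le> q\<^sup>2 \<parallel>x\<parallel>\<^sup>2 \<parallel>R x\<parallel>\<^sup>2\<close>.\<close>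

lemma norm_le_if_cinner_self_le:
  fixes R :: "'a::complex_inner \<Rightarrow> 'a"
  assumes "clinear R" and selfadjoint: "\<And>x y. cinner (R x) y = cinner x (R y)"
    and pos: "\<And>x. 0 \<le> Re (cinner (R x) x)"
    and le: "\<And>x. Re (cinner (R x) x) \<le> q * (norm x)\<^sup>2" and "0 \<le> q"
  shows "norm (R x) \<le> q * norm x"
proof -
  have herm: "cinner (R u) v = cnj (cinner (R v) u)" for u v
    by (metis selfadjoint cinner_commute)
  have "(cmod (cinner (R x) (R x)))\<^sup>2 \<le> Re (cinner (R x) x) * Re (cinner (R (R x)) (R x))"
    by (rule hermitian_form_Cauchy_Schwarz[OF _ _ herm pos])
       (simp_all add: clinear_add[OF \<open>clinear R\<close>] clinear_scaleC[OF \<open>clinear R\<close>]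
         cinner_add_left cinner_scaleC_left)
  also have "\<dots> \<le> (q * (norm x)\<^sup>2) * (q * (norm (R x))\<^sup>2)"
    using \<open>0 \<le> q\<close> by (intro mult_mono le pos) simp_all
  finally have squared: "(norm (R x))\<^sup>2 * (norm (R x))\<^sup>2 \<le> (q * norm x)\<^sup>2 * (norm (R x))\<^sup>2"
    by (simp add: cinner_self norm_mult power2_eq_square mult_ac)
  have "(norm (R x))\<^sup>2 \<le> (q * norm x)\<^sup>2"
  proof (cases "R x = 0")
    case False
    then have "(norm (R x))\<^sup>2 > 0" by simp
    with squared show ?thesis by (rule mult_right_le_imp_le)
  qed simp
  then show ?thesis by (rule power2_le_imp_le) (use \<open>0 \<le> q\<close> in simp)
qed

subclass (in complex_hilbert) banach ..

section \<open>Neumann series\<close>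

lemma linear_funpow:
  fixes f :: "'a::real_vector \<Rightarrow> 'a"
  shows "linear f \<Longrightarrow> linear (f ^^ n)"
proof (induction n)
  case 0
  show ?case by (simp add: linear_iff)
next
  case (Suc n)
  then show ?case using linear_compose[of "f ^^ n" f] by (simp add: comp_def)
qed

context
  fixes R :: "'a::banach \<Rightarrow> 'a" and q :: real
  assumes contraction: "\<And>x. norm (R x) \<le> q * norm x" and q: "0 \<le> q" "q < 1"
begin

lemma norm_funpow_le: "norm ((R ^^ j) x) \<le> q ^ j * norm x"
proof (induction j)
  case (Suc j)
  have "norm ((R ^^ Suc j) x) \<le> q * norm ((R ^^ j) x)" using contraction by simp
  also have "\<dots> \<le> q * (q ^ j * norm x)" using Suc q by (intro mult_left_mono) auto
  finally show ?case by simp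
qed simp

lemma summable_funpow: "summable (\<lambda>j. (R ^^ j) x)"
  using q norm_funpow_le
  by (intro summable_comparison_test[OF _ summable_mult2[OF summable_geometric]]) auto

lemma norm_suminf_funpow_le: "norm (\<Sum>j. (R ^^ j) x) \<le> norm x / (1 - q)"
proof -
  have "norm (\<Sum>j. (R ^^ j) x) \<le> (\<Sum>j. q ^ j * norm x)"
    using q by (intro norm_suminf_le norm_funpow_le summable_mult2 summable_geometric) auto
  also have "\<dots> = norm x / (1 - q)"
    using q by (simp add: suminf_mult2[symmetric] summable_geometric suminf_geometric)
  finally show ?thesis .
qed

lemma suminf_funpow_inverse:
  assumes "linear R"
  shows "(\<Sum>j. (R ^^ j) (x - R x)) = x"
proof -
  have "(\<lambda>j. (R ^^ j) x) \<longlonglongrightarrow> 0"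
  proof (rule Lim_null_comparison[where g="\<lambda>j. q ^ j * norm x"])
    show "\<forall>\<^sub>F j in sequentially. norm ((R ^^ j) x) \<le> q ^ j * norm x"
      using norm_funpow_le by simp
    show "(\<lambda>j. q ^ j * norm x) \<longlonglongrightarrow> 0"
      using q by (intro tendsto_mult_left_zero LIMSEQ_power_zero) simp
  qed
  then have "(\<lambda>j. (R ^^ j) x - (R ^^ Suc j) x) sums ((R ^^ 0) x - 0)"
    by (rule telescope_sums')
  moreover have "(R ^^ j) (x - R x) = (R ^^ j) x - (R ^^ Suc j) x" for j
    using linear_funpow[OF assms] by (simp add: linear_diff funpow_swap1)
  ultimately show ?thesis by (simp add: sums_iff)
qed

lemma bounded_linear_suminf_funpow:
  assumes "linear R"
  shows "bounded_linear (\<lambda>x. \<Sum>j. (R ^^ j) x)"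
proof (rule bounded_linear_intro[where K="1 / (1 - q)"])
  have "linear (R ^^ j)" for j using assms by (rule linear_funpow)
  then show "(\<Sum>j. (R ^^ j) (x + y)) = (\<Sum>j. (R ^^ j) x) + (\<Sum>j. (R ^^ j) y)"
    and "(\<Sum>j. (R ^^ j) (r *\<^sub>R x)) = r *\<^sub>R (\<Sum>j. (R ^^ j) x)" for x y r
    by (simp_all add: linear_add linear_scale suminf_add summable_funpow suminf_scaleR_right)
  show "norm (\<Sum>j. (R ^^ j) x) \<le> norm x * (1 / (1 - q))" for x
    using norm_suminf_funpow_le by simp
qed

lemma suminf_funpow_commute:
  assumes "bounded_linear L" "\<And>x. L (R x) = R (L x)"
  shows "L (\<Sum>j. (R ^^ j) x) = (\<Sum>j. (R ^^ j) (L x))"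
proof -
  have "L ((R ^^ j) x) = (R ^^ j) (L x)" for j
    by (induction j) (simp_all add: assms(2))
  then show ?thesis by (simp add: bounded_linear.suminf[OF assms(1) summable_funpow])
qed

end

context
  fixes R :: "'a::complex_hilbert \<Rightarrow> 'a" and q :: real
  assumes contraction: "\<And>x. norm (R x) \<le> q * norm x" and q: "0 \<le> q" "q < 1"
    and "clinear R"
begin

lemma clinear_suminf_funpow: "clinear (\<lambda>x. \<Sum>j. (R ^^ j) x)"
proof (rule clinearI)
  have "bounded_linear (\<lambda>x. \<Sum>j. (R ^^ j) x)"
    using contraction q clinear_imp_linear[OF \<open>clinear R\<close>] by (rule bounded_linear_suminf_funpow)
  from linear_add[OF bounded_linear.linear[OF this]]
  show "(\<Sum>j. (R ^^ j) (x + y)) = (\<Sum>j. (R ^^ j) x) + (\<Sum>j. (R ^^ j) y)" for x y .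
  show "(\<Sum>j. (R ^^ j) (a *\<^sub>C x)) = a *\<^sub>C (\<Sum>j. (R ^^ j) x)" for a x
    using contraction q bounded_linear_scaleC_right
    by (rule suminf_funpow_commute[symmetric]) (simp add: clinear_scaleC[OF \<open>clinear R\<close>])
qed

lemma suminf_funpow_selfadjoint:
  assumes selfadjoint: "\<And>x y. cinner (R x) y = cinner x (R y)"
  shows "cinner (\<Sum>j. (R ^^ j) x) y = cinner x (\<Sum>j. (R ^^ j) y)"
proof -
  have "cinner ((R ^^ j) x) y = cinner x ((R ^^ j) y)" for j
  proof (induction j arbitrary: y)
    case (Suc j)
    have "cinner ((R ^^ Suc j) x) y = cinner x ((R ^^ j) (R y))" by (simp add: selfadjoint Suc)
    then show ?case by (simp add: funpow_swap1)
  qed simp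
  then show ?thesis
    using summable_funpow[OF contraction q]
    by (simp add: cinner_suminf_left cinner_suminf_right)
qed

end

section \<open>Bessel sequences and frames\<close>

definition bessel_bound :: "(nat \<Rightarrow> 'a::complex_inner) \<Rightarrow> real \<Rightarrow> bool" where
  "bessel_bound f B \<longleftrightarrow> B > 0 \<and> (\<forall>x. summable (\<lambda>n. (cmod (cinner x (f n)))\<^sup>2) \<and>
       (\<Sum>n. (cmod (cinner x (f n)))\<^sup>2) \<le> B * (norm x)\<^sup>2)"

lemma bessel_seq_iff_bessel_bound: "bessel_seq f \<longleftrightarrow> (\<exists>B. bessel_bound f B)"
  unfolding bessel_seq_def bessel_bound_def by auto

lemma bessel_boundD:
  assumes "bessel_bound f B"
  shows "B > 0" "summable (\<lambda>n. (cmod (cinner x (f n)))\<^sup>2)"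
    "(\<Sum>n. (cmod (cinner x (f n)))\<^sup>2) \<le> B * (norm x)\<^sup>2"
  using assms unfolding bessel_bound_def by auto

lemma bessel_bound_mono:
  assumes "bessel_bound f B" "B \<le> B'"
  shows "bessel_bound f B'"
proof -
  have "B * (norm x)\<^sup>2 \<le> B' * (norm x)\<^sup>2" for x :: 'a
    using assms(2) by (simp add: mult_right_mono)
  then show ?thesis using assms unfolding bessel_bound_def by (fastforce intro: order_trans)
qed

lemma frame_seq_iff:
  "frame_seq f \<longleftrightarrow>
    (\<exists>A B. 0 < A \<and> bessel_bound f B \<and> (\<forall>x. A * (norm x)\<^sup>2 \<le> (\<Sum>n. (cmod (cinner x (f n)))\<^sup>2)))"
proof
  assume "frame_seq f"
  then obtain A B where "0 < A" and frame: "\<And>x. summable (\<lambda>n. (cmod (cinner x (f n)))\<^sup>2) \<and>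
      A * (norm x)\<^sup>2 \<le> (\<Sum>n. (cmod (cinner x (f n)))\<^sup>2) \<and>
      (\<Sum>n. (cmod (cinner x (f n)))\<^sup>2) \<le> B * (norm x)\<^sup>2"
    unfolding frame_seq_def by blast
  have "B * (norm x)\<^sup>2 \<le> max B 1 * (norm x)\<^sup>2" for x :: 'a
    by (simp add: mult_right_mono)
  then have "bessel_bound f (max B 1)"
    unfolding bessel_bound_def using frame by (fastforce intro: order_trans)
  with \<open>0 < A\<close> frame show "\<exists>A B. 0 < A \<and> bessel_bound f B \<and>
      (\<forall>x. A * (norm x)\<^sup>2 \<le> (\<Sum>n. (cmod (cinner x (f n)))\<^sup>2))" by blast
qed (auto simp: frame_seq_def bessel_bound_def)

lemma norm_sum_scaleC_le:
  assumes "bessel_bound g B" "finite I"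
  shows "(norm (\<Sum>i\<in>I. c i *\<^sub>C (g i::'a::complex_inner)))\<^sup>2 \<le> B * (\<Sum>i\<in>I. (cmod (c i))\<^sup>2)"
proof -
  define s where "s = (\<Sum>i\<in>I. c i *\<^sub>C g i)"
  have "(norm s)\<^sup>2 = cmod (cinner s s)" unfolding cinner_self norm_of_real by simp
  also have "cinner s s = (\<Sum>i\<in>I. cnj (c i) * cinner s (g i))"
    by (simp add: s_def cinner_sum_right cinner_scaleC_right)
  also have "cmod \<dots> \<le> (\<Sum>i\<in>I. cmod (c i) * cmod (cinner s (g i)))"
    by (rule order_trans[OF norm_sum]) (simp add: norm_mult)
  finally have "((norm s)\<^sup>2)\<^sup>2 \<le> (\<Sum>i\<in>I. cmod (c i) * cmod (cinner s (g i)))\<^sup>2"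
    by (intro power_mono) auto
  also have "\<dots> \<le> (\<Sum>i\<in>I. (cmod (c i))\<^sup>2) * (\<Sum>i\<in>I. (cmod (cinner s (g i)))\<^sup>2)"
    by (rule Cauchy_Schwarz_ineq_sum)
  also have "\<dots> \<le> (\<Sum>i\<in>I. (cmod (c i))\<^sup>2) * (B * (norm s)\<^sup>2)"
  proof (intro mult_left_mono sum_nonneg)
    show "(\<Sum>i\<in>I. (cmod (cinner s (g i)))\<^sup>2) \<le> B * (norm s)\<^sup>2"
      by (rule order_trans[OF sum_le_suminf[OF bessel_boundD(2)[OF assms(1)] assms(2)]
            bessel_boundD(3)[OF assms(1)]]) simp
  qed simp
  finally have squared: "(norm s)\<^sup>2 * (norm s)\<^sup>2 \<le> (B * (\<Sum>i\<in>I. (cmod (c i))\<^sup>2)) * (norm s)\<^sup>2"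
    by (simp add: power2_eq_square mult_ac)
  show ?thesis
  proof (cases "s = 0")
    case False
    then have "(norm s)\<^sup>2 > 0" by simp
    with squared show ?thesis unfolding s_def by (rule mult_right_le_imp_le)
  qed (use bessel_boundD(1)[OF assms(1)] in \<open>simp add: s_def[symmetric] sum_nonneg\<close>)
qed

lemma bessel_synthesis:
  assumes bessel: "bessel_bound g B" and c: "summable (\<lambda>n. (cmod (c n))\<^sup>2)"
  shows "summable (\<lambda>n. c n *\<^sub>C (g n::'a::complex_hilbert))"
    and "(norm (\<Sum>n. c n *\<^sub>C g n))\<^sup>2 \<le> B * (\<Sum>n. (cmod (c n))\<^sup>2)"
proof -
  have B: "B > 0" using bessel_boundD(1)[OF bessel] .
  show summable: "summable (\<lambda>n. c n *\<^sub>C g n)"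
    unfolding summable_Cauchy
  proof (intro allI impI)
    fix e :: real assume "e > 0"
    then obtain N where N: "\<And>m n. m \<ge> N \<Longrightarrow> norm (\<Sum>i\<in>{m..<n}. (cmod (c i))\<^sup>2) < e\<^sup>2 / B"
      using c B unfolding summable_Cauchy by (meson divide_pos_pos zero_less_power)
    have "norm (\<Sum>i\<in>{m..<n}. c i *\<^sub>C g i) < e" if "m \<ge> N" for m n
    proof -
      have "(norm (\<Sum>i\<in>{m..<n}. c i *\<^sub>C g i))\<^sup>2 \<le> B * (\<Sum>i\<in>{m..<n}. (cmod (c i))\<^sup>2)"
        by (rule norm_sum_scaleC_le[OF bessel]) simp
      also have "\<dots> < e\<^sup>2"
        using N[OF that, of n] B by (simp add: sum_nonneg field_simps)
      finally show ?thesis using \<open>e > 0\<close> by (simp add: power_less_imp_less_base)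
    qed
    then show "\<exists>N. \<forall>m\<ge>N. \<forall>n. norm (\<Sum>i\<in>{m..<n}. c i *\<^sub>C g i) < e" by blast
  qed
  have "(\<lambda>n. (norm (\<Sum>i<n. c i *\<^sub>C g i))\<^sup>2) \<longlonglongrightarrow> (norm (\<Sum>n. c n *\<^sub>C g n))\<^sup>2"
    by (intro tendsto_intros summable_LIMSEQ[OF summable])
  moreover have "(norm (\<Sum>i<n. c i *\<^sub>C g i))\<^sup>2 \<le> B * (\<Sum>n. (cmod (c n))\<^sup>2)" for n
  proof -
    have "(norm (\<Sum>i<n. c i *\<^sub>C g i))\<^sup>2 \<le> B * (\<Sum>i<n. (cmod (c i))\<^sup>2)"
      by (rule norm_sum_scaleC_le[OF bessel]) simp
    also have "\<dots> \<le> B * (\<Sum>n. (cmod (c n))\<^sup>2)"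
      using B sum_le_suminf[OF c, of "{..<n}"] by simp
    finally show ?thesis .
  qed
  ultimately show "(norm (\<Sum>n. c n *\<^sub>C g n))\<^sup>2 \<le> B * (\<Sum>n. (cmod (c n))\<^sup>2)"
    by (intro LIMSEQ_le_const2) auto
qed

lemma summable_cross_frame_op:
  assumes "bessel_bound f Bf" "bessel_bound g Bg"
  shows "summable (\<lambda>n. cinner x (f n) *\<^sub>C (g n::'a::complex_hilbert))"
  using bessel_synthesis(1)[OF assms(2) bessel_boundD(2)[OF assms(1)]] .

lemma norm_cross_frame_op_le:
  assumes "bessel_bound f Bf" "bessel_bound g Bg"
  shows "(norm (cross_frame_op f g (x::'a::complex_hilbert)))\<^sup>2
    \<le> Bg * (\<Sum>n. (cmod (cinner x (f n)))\<^sup>2)"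
  unfolding cross_frame_op_def
  using bessel_synthesis(2)[OF assms(2) bessel_boundD(2)[OF assms(1)]] .

lemma clinear_cross_frame_op:
  fixes f g :: "nat \<Rightarrow> 'a::complex_hilbert"
  assumes "bessel_bound f Bf" "bessel_bound g Bg"
  shows "clinear (cross_frame_op f g)"
proof (rule clinearI)
  note summable = summable_cross_frame_op[OF assms]
  show "cross_frame_op f g (x + y) = cross_frame_op f g x + cross_frame_op f g y" for x y
    unfolding cross_frame_op_def
    by (simp add: cinner_add_left scaleC_add_left suminf_add[OF summable summable])
  show "cross_frame_op f g (a *\<^sub>C x) = a *\<^sub>C cross_frame_op f g x" for a x
    unfolding cross_frame_op_def
    by (simp add: cinner_scaleC_left scaleC_scaleC[symmetric]
        bounded_linear.suminf[OF bounded_linear_scaleC_right summable])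
qed

lemma cinner_cross_frame_op:
  assumes "bessel_bound f Bf" "bessel_bound g Bg"
  shows "cinner (cross_frame_op f g x) y
    = (\<Sum>n. cinner x (f n) * cinner (g n::'a::complex_hilbert) y)"
  unfolding cross_frame_op_def cinner_suminf_left[OF summable_cross_frame_op[OF assms]]
  by (simp add: cinner_scaleC_left)

text \<open>\<open>cross_frame_op h h\<close> is the frame operator \<open>S\<close> of \<open>h\<close>.\<close>

lemma cross_frame_op_selfadjoint:
  assumes "bessel_bound h B"
  shows "cinner (cross_frame_op h h x) y = cinner x (cross_frame_op h h (y::'a::complex_hilbert))"
proof -
  note summable = summable_cross_frame_op[OF assms assms]
  have "cinner x (cross_frame_op h h y) = (\<Sum>n. cnj (cinner y (h n)) * cinner x (h n))"
    unfolding cross_frame_op_def cinner_suminf_right[OF summable] by (simp add: cinner_scaleC_right)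
  also have "\<dots> = (\<Sum>n. cinner x (h n) * cinner (h n) y)"
    by (simp add: cinner_commute[of y] mult.commute)
  finally show ?thesis by (simp add: cinner_cross_frame_op[OF assms assms])
qed

lemma cinner_cross_frame_op_self:
  assumes "bessel_bound h B"
  shows "cinner (cross_frame_op h h x) x
    = of_real (\<Sum>n. (cmod (cinner x (h n::'a::complex_hilbert)))\<^sup>2)"
proof -
  have "cinner (cross_frame_op h h x) x = (\<Sum>n. of_real ((cmod (cinner x (h n)))\<^sup>2))"
    unfolding cinner_cross_frame_op[OF assms assms]
    by (simp only: cinner_commute[of "h _" x] complex_norm_square)
  also have "\<dots> = of_real (\<Sum>n. (cmod (cinner x (h n)))\<^sup>2)"
    by (rule suminf_of_real[symmetric]) (rule bessel_boundD(2)[OF assms])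
  finally show ?thesis .
qed

lemma cross_frame_op_map_right:
  fixes f g :: "nat \<Rightarrow> 'a::complex_hilbert"
  assumes "bessel_bound f Bf" "bessel_bound g Bg" "clinear Q" "bounded_linear Q"
  shows "cross_frame_op f (\<lambda>n. Q (g n)) x = Q (cross_frame_op f g x)"
  unfolding cross_frame_op_def
  by (simp add: clinear_scaleC[OF assms(3)]
      bounded_linear.suminf[OF assms(4) summable_cross_frame_op[OF assms(1,2)]])

lemma bessel_bound_map_selfadjoint:
  assumes "bessel_bound f B" and selfadjoint: "\<And>x y. cinner (Q x) y = cinner x (Q y)"
    and norm_Q: "\<And>x. norm (Q x) \<le> c * norm x" and "0 < c"
  shows "bessel_bound (\<lambda>n. Q (f n::'a::complex_inner)) (B * c\<^sup>2)"
  unfolding bessel_bound_def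
proof (intro conjI allI)
  have B: "B > 0" using bessel_boundD(1)[OF assms(1)] .
  then show "B * c\<^sup>2 > 0" using \<open>0 < c\<close> by simp
  fix x
  have shift: "(\<lambda>n. (cmod (cinner x (Q (f n))))\<^sup>2) = (\<lambda>n. (cmod (cinner (Q x) (f n)))\<^sup>2)"
    by (simp add: selfadjoint)
  show "summable (\<lambda>n. (cmod (cinner x (Q (f n))))\<^sup>2)"
    unfolding shift by (rule bessel_boundD(2)[OF assms(1)])
  have "(\<Sum>n. (cmod (cinner x (Q (f n))))\<^sup>2) \<le> B * (norm (Q x))\<^sup>2"
    unfolding shift by (rule bessel_boundD(3)[OF assms(1)])
  also have "\<dots> \<le> B * (c * norm x)\<^sup>2"
    using B norm_Q[of x] by (intro mult_left_mono power_mono) auto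
  finally show "(\<Sum>n. (cmod (cinner x (Q (f n))))\<^sup>2) \<le> B * c\<^sup>2 * (norm x)\<^sup>2"
    by (simp add: power_mult_distrib mult_ac)
qed

definition extend_seq :: "nat \<Rightarrow> (nat \<Rightarrow> 'a) \<Rightarrow> (nat \<Rightarrow> 'a) \<Rightarrow> nat \<Rightarrow> 'a" where
  "extend_seq k xs f = (\<lambda>n. if n < k then xs n else f (n - k))"

lemma sum_cmod_cinner_extend_seq:
  fixes f xs :: "nat \<Rightarrow> 'a::complex_inner"
  assumes "summable (\<lambda>n. (cmod (cinner x (f n)))\<^sup>2)"
  shows "summable (\<lambda>n. (cmod (cinner x (extend_seq k xs f n)))\<^sup>2)"
    and "(\<Sum>n. (cmod (cinner x (extend_seq k xs f n)))\<^sup>2)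
      = (\<Sum>i<k. (cmod (cinner x (xs i)))\<^sup>2) + (\<Sum>n. (cmod (cinner x (f n)))\<^sup>2)"
proof -
  have shift: "(\<lambda>n. (cmod (cinner x (extend_seq k xs f (n + k))))\<^sup>2)
    = (\<lambda>n. (cmod (cinner x (f n)))\<^sup>2)"
    by (simp add: extend_seq_def)
  show summable: "summable (\<lambda>n. (cmod (cinner x (extend_seq k xs f n)))\<^sup>2)"
    using summable_iff_shift[of "\<lambda>n. (cmod (cinner x (extend_seq k xs f n)))\<^sup>2" k] assms shift
    by simp
  have "(\<Sum>i<k. (cmod (cinner x (extend_seq k xs f i)))\<^sup>2) = (\<Sum>i<k. (cmod (cinner x (xs i)))\<^sup>2)"
    by (simp add: extend_seq_def)
  then show "(\<Sum>n. (cmod (cinner x (extend_seq k xs f n)))\<^sup>2)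
      = (\<Sum>i<k. (cmod (cinner x (xs i)))\<^sup>2) + (\<Sum>n. (cmod (cinner x (f n)))\<^sup>2)"
    using suminf_split_initial_segment[OF summable, of k] by (simp add: shift)
qed

lemma sum_cmod_cinner_le:
  "(\<Sum>i<k. (cmod (cinner x (xs i)))\<^sup>2) \<le> (\<Sum>i<k. (norm (xs i))\<^sup>2) * (norm (x::'a::complex_inner))\<^sup>2"
  unfolding sum_distrib_right
  by (intro sum_mono) (metis norm_cinner_le power_mono norm_ge_zero power_mult_distrib mult.commute)

lemma bessel_bound_extend_seq:
  assumes "bessel_bound f B"
  shows "bessel_bound (extend_seq k xs f) (B + (\<Sum>i<k. (norm (xs i::'a::complex_inner))\<^sup>2))"
  unfolding bessel_bound_def
proof (intro conjI allI)
  show "B + (\<Sum>i<k. (norm (xs i))\<^sup>2) > 0"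
    using bessel_boundD(1)[OF assms] by (simp add: add_pos_nonneg sum_nonneg)
  fix x
  note summable = bessel_boundD(2)[OF assms, of x]
  show "summable (\<lambda>n. (cmod (cinner x (extend_seq k xs f n)))\<^sup>2)"
    by (rule sum_cmod_cinner_extend_seq(1)[OF summable])
  show "(\<Sum>n. (cmod (cinner x (extend_seq k xs f n)))\<^sup>2)
    \<le> (B + (\<Sum>i<k. (norm (xs i))\<^sup>2)) * (norm x)\<^sup>2"
    unfolding sum_cmod_cinner_extend_seq(2)[OF summable]
    using bessel_boundD(3)[OF assms, of x] sum_cmod_cinner_le[where x=x and k=k and xs=xs]
    by (simp add: algebra_simps)
qed

lemma cross_frame_op_extend_seq:
  fixes f xs :: "nat \<Rightarrow> 'a::complex_hilbert"
  assumes "bessel_bound f B"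
  shows "cross_frame_op (extend_seq k xs f) (extend_seq k xs f) x
    = (\<Sum>i<k. cinner x (xs i) *\<^sub>C xs i) + cross_frame_op f f x"
proof -
  let ?h = "extend_seq k xs f"
  have "bessel_bound ?h (B + (\<Sum>i<k. (norm (xs i))\<^sup>2))"
    by (rule bessel_bound_extend_seq[OF assms])
  then have summable: "summable (\<lambda>n. cinner x (?h n) *\<^sub>C ?h n)"
    by (intro summable_cross_frame_op)
  show ?thesis
    using suminf_split_initial_segment[OF summable, of k]
    by (simp add: cross_frame_op_def extend_seq_def add.commute)
qed

section \<open>Inverting the frame operator\<close>

lemma clinear_frame_residual:
  assumes "bessel_bound h B"
  shows "clinear (\<lambda>x. x - c *\<^sub>R cross_frame_op h h (x::'a::complex_hilbert))"
  using clinear_cross_frame_op[OF assms assms]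
  by (intro clinearI)
     (simp_all add: clinear_add clinear_scaleC scaleC_diff_right scaleC_scaleR scaleR_add_right)

lemma frame_residual_selfadjoint:
  assumes "bessel_bound h B"
  shows "cinner (x - c *\<^sub>R cross_frame_op h h x) y
    = cinner x (y - c *\<^sub>R cross_frame_op h h (y::'a::complex_hilbert))"
  by (simp add: cinner_diff_left cinner_diff_right cinner_scaleR_left cinner_scaleR_right
      cross_frame_op_selfadjoint[OF assms])

lemma norm_frame_residual_le:
  fixes h :: "nat \<Rightarrow> 'a::complex_hilbert"
  assumes bessel: "bessel_bound h B" and "A \<le> B"
    and lower: "\<And>x. A * (norm x)\<^sup>2 \<le> (\<Sum>n. (cmod (cinner x (h n)))\<^sup>2)"
  shows "norm (x - (1 / B) *\<^sub>R cross_frame_op h h x) \<le> (1 - A / B) * norm x"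
proof -
  define R where "R x = x - (1 / B) *\<^sub>R cross_frame_op h h x" for x
  have B: "B > 0" using bessel_boundD(1)[OF bessel] .
  have Re: "Re (cinner (R x) x) = (norm x)\<^sup>2 - (\<Sum>n. (cmod (cinner x (h n)))\<^sup>2) / B" for x
    by (simp add: R_def cinner_diff_left cinner_scaleR_left cinner_cross_frame_op_self[OF bessel]
        cinner_self)
  have "clinear R" unfolding R_def[abs_def] by (rule clinear_frame_residual[OF bessel])
  moreover have "cinner (R x) y = cinner x (R y)" for x y
    unfolding R_def by (rule frame_residual_selfadjoint[OF bessel])
  moreover have "0 \<le> Re (cinner (R x) x)" for x
    using bessel_boundD(3)[OF bessel, of x] B by (simp add: Re field_simps)
  moreover have "Re (cinner (R x) x) \<le> (1 - A / B) * (norm x)\<^sup>2" for x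
    using lower[of x] B by (simp add: Re field_simps)
  moreover have "0 \<le> 1 - A / B" using \<open>A \<le> B\<close> B by simp
  ultimately have "norm (R x) \<le> (1 - A / B) * norm x" by (rule norm_le_if_cinner_self_le)
  then show ?thesis by (simp add: R_def)
qed

lemma frame_operator_inverse:
  fixes h :: "nat \<Rightarrow> 'a::complex_hilbert"
  assumes "bessel_bound h B" "0 < A"
    and lower: "\<And>x. A * (norm x)\<^sup>2 \<le> (\<Sum>n. (cmod (cinner x (h n)))\<^sup>2)"
  obtains Q where "clinear Q" "bounded_linear Q" "\<And>x y. cinner (Q x) y = cinner x (Q y)"
    "\<And>x. norm (Q x) \<le> norm x / A" "\<And>x. Q (cross_frame_op h h x) = x"
proof
  define C where "C = A + B"
  have "B > 0" using bessel_boundD(1)[OF assms(1)] .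
  then have C: "A < C" "C > 0" using \<open>0 < A\<close> by (simp_all add: C_def)
  have bessel: "bessel_bound h C"
    by (rule bessel_bound_mono[OF assms(1)]) (use \<open>0 < A\<close> in \<open>simp add: C_def\<close>)
  define R where "R x = x - (1 / C) *\<^sub>R cross_frame_op h h x" for x
  define q where "q = 1 - A / C"
  have q: "0 \<le> q" "q < 1" using C \<open>0 < A\<close> by (simp_all add: q_def)
  have contraction: "norm (R x) \<le> q * norm x" for x
    unfolding R_def q_def
    by (rule norm_frame_residual_le[OF bessel _ lower]) (use C in simp)
  have "clinear R" unfolding R_def[abs_def] by (rule clinear_frame_residual[OF bessel])
  have selfadjoint_R: "cinner (R x) y = cinner x (R y)" for x y
    unfolding R_def by (rule frame_residual_selfadjoint[OF bessel])
  define N where "N x = (\<Sum>j. (R ^^ j) x)" for x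
  have N: "clinear N" unfolding N_def using contraction q \<open>clinear R\<close>
    by (rule clinear_suminf_funpow)
  have "bounded_linear N"
    unfolding N_def using contraction q clinear_imp_linear[OF \<open>clinear R\<close>]
    by (rule bounded_linear_suminf_funpow)
  define Q where "Q x = N ((1 / C) *\<^sub>R x)" for x
  show "clinear Q"
    by (rule clinearI) (simp_all add: Q_def clinear_add[OF N] clinear_scaleC[OF N] scaleR_add_right
        scaleC_scaleR[symmetric])
  show "bounded_linear Q"
    unfolding Q_def
    by (rule bounded_linear_compose[OF \<open>bounded_linear N\<close> bounded_linear_scaleR_right])
  have Q_eq: "Q x = (1 / C) *\<^sub>R N x" for x
    unfolding Q_def by (rule linear_scale[OF bounded_linear.linear[OF \<open>bounded_linear N\<close>]])
  show "cinner (Q x) y = cinner x (Q y)" for x y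
    using suminf_funpow_selfadjoint[OF contraction q \<open>clinear R\<close> selfadjoint_R]
    by (simp add: Q_eq N_def cinner_scaleR_left cinner_scaleR_right)
  show "norm (Q x) \<le> norm x / A" for x
  proof -
    have "norm (Q x) \<le> norm ((1 / C) *\<^sub>R x) / (1 - q)"
      unfolding Q_def N_def using contraction q by (rule norm_suminf_funpow_le)
    also have "\<dots> = norm x / A" using C \<open>0 < A\<close> by (simp add: q_def field_simps)
    finally show ?thesis .
  qed
  show "Q (cross_frame_op h h x) = x" for x
  proof -
    have "(1 / C) *\<^sub>R cross_frame_op h h x = x - R x" by (simp add: R_def)
    then show ?thesis
      unfolding Q_def N_def
      using suminf_funpow_inverse[OF contraction q clinear_imp_linear[OF \<open>clinear R\<close>]] by simp
  qed
qed

section \<open>Compact operators\<close>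

lemma compact_bounded_combinations:
  fixes w :: "nat \<Rightarrow> 'a::complex_inner"
  shows "compact {(\<Sum>i<k. c i *\<^sub>C w i) | c. \<forall>i<k. cmod (c i) \<le> M}"
proof (induction k)
  case 0
  have "{(\<Sum>i<0. c i *\<^sub>C w i) | c. \<forall>i<0. cmod (c i) \<le> M} = {0}" by auto
  then show ?case by simp
next
  case (Suc k)
  let ?D = "{(\<Sum>i<k. c i *\<^sub>C w i) | c. \<forall>i<k. cmod (c i) \<le> M}"
  let ?E = "(\<lambda>z. z *\<^sub>C w k) ` cball 0 M"
  have cE: "compact ?E"
    by (intro compact_continuous_image linear_continuous_on bounded_linear_scaleC_left
        compact_cball)
  have eq: "{(\<Sum>i<Suc k. c i *\<^sub>C w i) | c. \<forall>i<Suc k. cmod (c i) \<le> M}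
    = {x + y | x y. x \<in> ?D \<and> y \<in> ?E}"
  proof (intro equalityI subsetI)
    fix v assume "v \<in> {(\<Sum>i<Suc k. c i *\<^sub>C w i) | c. \<forall>i<Suc k. cmod (c i) \<le> M}"
    then obtain c where v: "v = (\<Sum>i<Suc k. c i *\<^sub>C w i)" and c: "\<forall>i<Suc k. cmod (c i) \<le> M" by blast
    have "(\<Sum>i<k. c i *\<^sub>C w i) \<in> ?D" using c by auto
    moreover have "c k *\<^sub>C w k \<in> ?E" using c by auto
    ultimately show "v \<in> {x + y | x y. x \<in> ?D \<and> y \<in> ?E}" unfolding v by auto
  next
    fix v assume "v \<in> {x + y | x y. x \<in> ?D \<and> y \<in> ?E}"
    then obtain c z where v: "v = (\<Sum>i<k. c i *\<^sub>C w i) + z *\<^sub>C w k"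
      and c: "\<forall>i<k. cmod (c i) \<le> M" and z: "cmod z \<le> M" by auto
    define c' where "c' = c(k := z)"
    have "(\<Sum>i<k. c' i *\<^sub>C w i) = (\<Sum>i<k. c i *\<^sub>C w i)" by (rule sum.cong) (auto simp: c'_def)
    then have "v = (\<Sum>i<Suc k. c' i *\<^sub>C w i)" unfolding v by (simp add: c'_def)
    moreover have "\<forall>i<Suc k. cmod (c' i) \<le> M" using c z by (auto simp: c'_def less_Suc_eq)
    ultimately show "v \<in> {(\<Sum>i<Suc k. c i *\<^sub>C w i) | c. \<forall>i<Suc k. cmod (c i) \<le> M}" by blast
  qed
  show ?case unfolding eq by (rule compact_sums[OF Suc.IH cE])
qed

lemma compact_closure_if_subset_compact:
  fixes D :: "'a::metric_space set"
  assumes "compact D" "X \<subseteq> D"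
  shows "compact (closure X)"
proof -
  have "closure X \<subseteq> D" by (rule closure_minimal[OF assms(2) compact_imp_closed[OF assms(1)]])
  then have "closure X = D \<inter> closure X" by blast
  then show ?thesis using compact_Int_closed[OF assms(1), of "closure X"] by simp
qed

lemma compact_operator_finite_rank:
  fixes u w :: "nat \<Rightarrow> 'a::complex_inner"
  shows "compact_operator (\<lambda>x. \<Sum>i<k. cinner x (u i) *\<^sub>C w i)"
proof -
  define M where "M = (\<Sum>i<k. norm (u i))"
  have "cmod (cinner x (u i)) \<le> M" if "norm x \<le> 1" "i < k" for x i
  proof -
    have "cmod (cinner x (u i)) \<le> norm x * norm (u i)" by (rule norm_cinner_le)
    also have "\<dots> \<le> norm (u i)" using that(1) by (simp add: mult_left_le_one_le)
    also have "\<dots> \<le> M" unfolding M_def using that(2) by (auto intro: member_le_sum)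
    finally show ?thesis .
  qed
  then have "(\<lambda>x. \<Sum>i<k. cinner x (u i) *\<^sub>C w i) ` cball 0 1
      \<subseteq> {(\<Sum>i<k. c i *\<^sub>C w i) | c. \<forall>i<k. cmod (c i) \<le> M}"
    by (auto intro!: exI[of _ "\<lambda>i. cinner _ (u i)"])
  then show ?thesis
    unfolding compact_operator_def
    by (rule compact_closure_if_subset_compact[OF compact_bounded_combinations])
qed

lemma compact_operator_finite_net:
  assumes "compact_operator K" "0 < e"
  obtains Y where "finite Y" "\<And>x. norm x \<le> 1 \<Longrightarrow> \<exists>y\<in>Y. dist (K x) y < e"
proof -
  let ?C = "closure (K ` cball 0 1)"
  have "compact ?C" using assms(1) unfolding compact_operator_def .
  have "?C \<subseteq> (\<Union>y\<in>?C. ball y e)"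
  proof
    fix z assume "z \<in> ?C"
    then show "z \<in> (\<Union>y\<in>?C. ball y e)" using \<open>0 < e\<close> by (intro UN_I[of z]) simp_all
  qed
  then obtain Y where "Y \<subseteq> ?C" "finite Y" and cover: "?C \<subseteq> (\<Union>y\<in>Y. ball y e)"
    by (rule compactE_image[OF \<open>compact ?C\<close>, rotated]) (simp_all add: open_ball)
  show ?thesis
  proof (rule that[OF \<open>finite Y\<close>])
    fix x :: 'a assume "norm x \<le> 1"
    then have "K x \<in> ?C" by (intro subsetD[OF closure_subset] imageI) simp
    with cover obtain y where "y \<in> Y" "dist y (K x) < e" by auto
    then show "\<exists>y\<in>Y. dist (K x) y < e" by (auto simp: dist_commute)
  qed
qed

lemma cinner_sq_add_norm_sq_ge_if_near:
  fixes T :: "'a::complex_inner \<Rightarrow> 'a"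
  assumes "norm u = 1" "dist (u - T u) y < 1 / 4"
  shows "1 \<le> 16 * ((cmod (cinner u y))\<^sup>2 + (norm (T u))\<^sup>2)"
proof (cases "norm (T u) \<ge> 1 / 4")
  case True
  then have "(1 / 4)\<^sup>2 \<le> (norm (T u))\<^sup>2" by (intro power_mono) auto
  then show ?thesis by (simp add: power2_eq_square add_increasing)
next
  case False
  have "norm (u - y) \<le> norm (T u) + dist (u - T u) y"
    using norm_triangle_ineq[of "T u" "u - T u - y"] by (simp add: dist_norm)
  then have "(norm (u - y))\<^sup>2 < (1 / 2)\<^sup>2"
    using False assms(2) by (intro power_strict_mono) auto
  then have "1 + (norm y)\<^sup>2 - 2 * Re (cinner u y) < 1 / 4"
    using power2_norm_diff[of u y] assms(1) by (simp add: power2_eq_square)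
  then have "3 / 8 < cmod (cinner u y)"
    using zero_le_power2[of "norm y"] complex_Re_le_cmod[of "cinner u y"] by linarith
  then have "(3 / 8)\<^sup>2 < (cmod (cinner u y))\<^sup>2" by (intro power_strict_mono) auto
  then show ?thesis by (simp add: power2_eq_square distrib_left add_increasing2)
qed

lemma lower_bound_if_compact_perturbation:
  fixes T :: "'a::complex_inner \<Rightarrow> 'a"
  assumes "linear T" "compact_operator (\<lambda>x. x - T x)"
  obtains k :: nat and ys :: "nat \<Rightarrow> 'a"
  where "\<And>x. (norm x)\<^sup>2 \<le> 16 * ((\<Sum>i<k. (cmod (cinner x (ys i)))\<^sup>2) + (norm (T x))\<^sup>2)"
proof -
  obtain Y where "finite Y" and net: "\<And>x. norm x \<le> 1 \<Longrightarrow> \<exists>y\<in>Y. dist (x - T x) y < 1 / 4"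
    using compact_operator_finite_net[OF assms(2), of "1 / 4"] by auto
  obtain ys where "set ys = Y" using finite_list[OF \<open>finite Y\<close>] by blast
  define F where "F x = (\<Sum>i<length ys. (cmod (cinner x (ys ! i)))\<^sup>2)" for x
  have F_nonneg: "F x \<ge> 0" for x unfolding F_def by (simp add: sum_nonneg)
  have unit: "1 \<le> 16 * (F u + (norm (T u))\<^sup>2)" if unit_u: "norm u = 1" for u
  proof -
    obtain y where "y \<in> Y" and near: "dist (u - T u) y < 1 / 4" using net[of u] unit_u by auto
    then obtain i where "i < length ys" "ys ! i = y"
      using \<open>set ys = Y\<close> by (auto simp: in_set_conv_nth)
    then have "(cmod (cinner u y))\<^sup>2 \<le> F u"
      unfolding F_def using member_le_sum[of i "{..<length ys}" "\<lambda>i. (cmod (cinner u (ys ! i)))\<^sup>2"]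
      by auto
    with cinner_sq_add_norm_sq_ge_if_near[where T=T, OF unit_u near] show ?thesis
      by (simp add: distrib_left)
  qed
  have "(norm x)\<^sup>2 \<le> 16 * (F x + (norm (T x))\<^sup>2)" for x
  proof (cases "x = 0")
    case False
    define r where "r = 1 / norm x"
    have "r > 0" using False by (simp add: r_def)
    have "F (r *\<^sub>R x) + (norm (T (r *\<^sub>R x)))\<^sup>2 = r\<^sup>2 * (F x + (norm (T x))\<^sup>2)"
      using \<open>r > 0\<close>
      by (simp add: F_def linear_scale[OF assms(1)] cinner_scaleR_left norm_mult power_mult_distrib
          sum_distrib_left distrib_left)
    moreover have "norm (r *\<^sub>R x) = 1" using False by (simp add: r_def)
    ultimately have "1 \<le> 16 * (r\<^sup>2 * (F x + (norm (T x))\<^sup>2))" using unit by metis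
    then show ?thesis using False by (simp add: r_def field_simps)
  qed (simp add: F_nonneg)
  then show ?thesis using that unfolding F_def by blast
qed

lemma frame_extension_if_essentially_dual:
  fixes f g :: "nat \<Rightarrow> 'a::complex_hilbert"
  assumes "essentially_dual f g"
  shows "\<exists>(k::nat) xs. frame_seq (extend_seq k xs f)"
proof -
  obtain Bf Bg where bf: "bessel_bound f Bf" and bg: "bessel_bound g Bg"
    and compact: "compact_operator (\<lambda>x. x - cross_frame_op f g x)"
    using assms unfolding essentially_dual_def bessel_seq_iff_bessel_bound by blast
  have "linear (cross_frame_op f g)"
    by (rule clinear_imp_linear[OF clinear_cross_frame_op[OF bf bg]])
  then obtain k :: nat and ys where lower:
    "\<And>x. (norm x)\<^sup>2 \<le> 16 * ((\<Sum>i<k. (cmod (cinner x (ys i)))\<^sup>2) + (norm (cross_frame_op f g x))\<^sup>2)"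
    using compact lower_bound_if_compact_perturbation by blast
  define M where "M = max 1 Bg"
  have "1 / (16 * M) * (norm x)\<^sup>2 \<le> (\<Sum>n. (cmod (cinner x (extend_seq k ys f n)))\<^sup>2)" for x
  proof -
    define F where "F = (\<Sum>i<k. (cmod (cinner x (ys i)))\<^sup>2)"
    define Sf where "Sf = (\<Sum>n. (cmod (cinner x (f n)))\<^sup>2)"
    have "F \<ge> 0" "Sf \<ge> 0"
      unfolding F_def Sf_def using bessel_boundD(2)[OF bf] by (simp_all add: sum_nonneg suminf_nonneg)
    have "(norm x)\<^sup>2 \<le> 16 * (F + Bg * Sf)"
      using lower[of x] norm_cross_frame_op_le[OF bf bg, of x] unfolding F_def Sf_def by simp
    also have "\<dots> \<le> 16 * (M * F + M * Sf)"
      using mult_right_mono[of 1 M F] mult_right_mono[of Bg M Sf] \<open>F \<ge> 0\<close> \<open>Sf \<ge> 0\<close>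
      by (simp add: M_def)
    also have "M * F + M * Sf = M * (\<Sum>n. (cmod (cinner x (extend_seq k ys f n)))\<^sup>2)"
      unfolding sum_cmod_cinner_extend_seq(2)[OF bessel_boundD(2)[OF bf]] F_def Sf_def
      by (simp add: distrib_left)
    finally show ?thesis by (simp add: M_def field_simps)
  qed
  moreover have "0 < 1 / (16 * M)" by (simp add: M_def)
  ultimately have "frame_seq (extend_seq k ys f)"
    unfolding frame_seq_iff using bessel_bound_extend_seq[OF bf] by blast
  then show ?thesis by blast
qed

lemma essentially_dual_if_frame_extension:
  fixes f xs :: "nat \<Rightarrow> 'a::complex_hilbert"
  assumes "bessel_seq f" "frame_seq (extend_seq k xs f)"
  shows "\<exists>g. essentially_dual f g"
proof -
  let ?h = "extend_seq k xs f"
  obtain Bf where bf: "bessel_bound f Bf"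
    using assms(1) unfolding bessel_seq_iff_bessel_bound by blast
  obtain A Bh where "0 < A" and bh: "bessel_bound ?h Bh"
    and lower: "\<And>x. A * (norm x)\<^sup>2 \<le> (\<Sum>n. (cmod (cinner x (?h n)))\<^sup>2)"
    using assms(2) unfolding frame_seq_iff by blast
  obtain Q where Q: "clinear Q" "bounded_linear Q"
    and selfadjoint: "\<And>x y. cinner (Q x) y = cinner x (Q y)"
    and norm_Q: "\<And>x. norm (Q x) \<le> norm x / A" and inverse: "\<And>x. Q (cross_frame_op ?h ?h x) = x"
    using frame_operator_inverse[OF bh \<open>0 < A\<close> lower] by blast
  define g where "g n = Q (f n)" for n
  have bg: "bessel_bound g (Bf * (1 / A)\<^sup>2)"
    unfolding g_def
    by (rule bessel_bound_map_selfadjoint[OF bf selfadjoint]) (simp_all add: norm_Q \<open>0 < A\<close>)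
  have "x - cross_frame_op f g x = (\<Sum>i<k. cinner x (xs i) *\<^sub>C Q (xs i))" for x
  proof -
    have "x = Q (cross_frame_op ?h ?h x)" by (rule inverse[symmetric])
    also have "\<dots> = Q (\<Sum>i<k. cinner x (xs i) *\<^sub>C xs i) + Q (cross_frame_op f f x)"
      by (simp add: cross_frame_op_extend_seq[OF bf] clinear_add[OF Q(1)])
    also have "Q (cross_frame_op f f x) = cross_frame_op f g x"
      unfolding g_def by (rule cross_frame_op_map_right[OF bf bf Q, symmetric])
    finally have "x = (\<Sum>i<k. cinner x (xs i) *\<^sub>C Q (xs i)) + cross_frame_op f g x"
      by (simp add: linear_sum[OF bounded_linear.linear[OF Q(2)]] clinear_scaleC[OF Q(1)])
    then show ?thesis by (simp add: diff_eq_eq)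
  qed
  then have "compact_operator (\<lambda>x. x - cross_frame_op f g x)"
    using compact_operator_finite_rank[where k=k and u=xs and w="\<lambda>i. Q (xs i)"] by simp
  then have "essentially_dual f g"
    unfolding essentially_dual_def bessel_seq_iff_bessel_bound using bf bg by blast
  then show ?thesis by blast
qed

theorem theorem2p7:
  fixes f :: "nat \<Rightarrow> 'a::complex_hilbert"
  assumes "separable_type TYPE('a)"
    and "\<not> finite_dim_complex TYPE('a)"
    and "bessel_seq f"
  shows "(\<exists>(k::nat) (x::nat \<Rightarrow> 'a). frame_seq (\<lambda>n. if n < k then x n else f (n - k)))
         \<longleftrightarrow> (\<exists>g. bessel_seq g \<and> essentially_dual f g)"
proof
  assume "\<exists>(k::nat) (x::nat \<Rightarrow> 'a). frame_seq (\<lambda>n. if n < k then x n else f (n - k))"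
  then show "\<exists>g. bessel_seq g \<and> essentially_dual f g"
    using essentially_dual_if_frame_extension[OF assms(3)]
    unfolding extend_seq_def essentially_dual_def by blast
next
  assume "\<exists>g. bessel_seq g \<and> essentially_dual f g"
  then show "\<exists>(k::nat) (x::nat \<Rightarrow> 'a). frame_seq (\<lambda>n. if n < k then x n else f (n - k))"
    using frame_extension_if_essentially_dual unfolding extend_seq_def by blast
qed

end
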